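(* Let $P_1$ be the uniform distribution on $[0,\frac12]$, let $P_2$ be the uniform distribution on $[\frac34,1]$, and let $P=\frac34P_1+\frac14P_2$. Then the set $\{\frac18,\frac38,\frac78\}$ forms an optimal set of three-means for $P$, with quantization error $V_3=\frac1{192}$.
   Context: For a finite set $\alpha\subset\mathbb R$, $V(P;\alpha)=\int\min_{a\in\alpha}(x-a)^2\,dP(x)$; $V_n=\inf\{V(P;\alpha):\mathrm{card}(\alpha)\le n\}$; an optimal set of $n$-means is a set $\alpha$ with $\mathrm{card}(\alpha)\le n$ and $V(P;\alpha)=V_n$. *)

theory Defs
  imports "HOL-Probability.Probability"
begin

text \<open>Distortion V(P;alpha) = integral of min_{a in alpha} (x-a)^2 dP(x),
  taken as a nonnegative (extended) integral so it is always defined.\<close>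
definition distortion :: "real measure \<Rightarrow> real set \<Rightarrow> ennreal" where
  "distortion P \<alpha> = (\<integral>\<^sup>+ x. ennreal (Min ((\<lambda>a. (x - a)\<^sup>2) ` \<alpha>)) \<partial>P)"

definition quant_error :: "real measure \<Rightarrow> nat \<Rightarrow> ennreal" where
  "quant_error P n = (INF \<alpha> \<in> {\<alpha>. finite \<alpha> \<and> \<alpha> \<noteq> {} \<and> card \<alpha> \<le> n}. distortion P \<alpha>)"

definition optimal_n_means :: "real measure \<Rightarrow> nat \<Rightarrow> real set \<Rightarrow> bool" where
  "optimal_n_means P n \<alpha> \<longleftrightarrow> finite \<alpha> \<and> \<alpha> \<noteq> {} \<and> card \<alpha> \<le> n \<and>
     distortion P \<alpha> = quant_error P n"

definition P1 :: "real measure" where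
  "P1 = uniform_measure lborel {0..1/2}"

definition P2 :: "real measure" where
  "P2 = uniform_measure lborel {3/4..1}"

definition Pmix :: "real measure" where
  "Pmix = measure_of UNIV (sets borel)
      (\<lambda>A. ennreal (3/4) * emeasure P1 A + ennreal (1/4) * emeasure P2 A)"

end

theory Submission
  imports Defs
begin

text \<open>
  P has density 3/2 on [0,1/2] and 1 on [3/4,1]. For centres a1 \<le> a2 \<le> a3 the
  nearest-centre cells are cut at the midpoints, and a cell [u,v] served by a contributes
  \<open>\<integral>(x - a)\<^sup>2 = (v - u)\<^sup>3/12 + (v - u)(a - (u + v)/2)\<^sup>2\<close>, so the distortion is an
  explicit function of the centres. It is bounded below by 1/192 by a case split on where the
  cuts fall relative to the gap (1/2,3/4): cubes alone give the bound unless a cell covers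
  pieces on both sides of the gap, and then the two pieces, of masses A and B with centroids
  at distance at least D, cost at least \<open>A B D\<^sup>2/(A + B)\<close> beyond their cubic terms.
  The value 1/192 is attained at {1/8, 3/8, 7/8}, whose cells are [0,1/4], [1/4,1/2], [3/4,1].
\<close>

lemma clamp_real:
  fixes lo hi x :: real
  assumes "lo \<le> hi"
  shows "clamp lo hi x = max lo (min hi x)"
  using assms unfolding clamp_def Basis_real_def by (auto simp: max_def min_def)

lemma clamp_real_mono:
  fixes lo hi x y :: real
  assumes "lo \<le> hi" "x \<le> y"
  shows "clamp lo hi x \<le> clamp lo hi y"
  unfolding clamp_real[OF \<open>lo \<le> hi\<close>] using \<open>x \<le> y\<close> by (intro max.mono order.refl min.mono)

lemma density_mixture:
  assumes [measurable]: "f \<in> borel_measurable M" "g \<in> borel_measurable M"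
  shows "measure_of (space M) (sets M)
           (\<lambda>A. c * emeasure (density M f) A + d * emeasure (density M g) A)
         = density M (\<lambda>x. c * f x + d * g x)"
proof -
  have "density M (\<lambda>x. c * f x + d * g x)
      = measure_of (space M) (sets M) (emeasure (density M (\<lambda>x. c * f x + d * g x)))"
    by (metis measure_of_of_measure sets_density space_density)
  also have "\<dots> = measure_of (space M) (sets M)
                     (\<lambda>A. c * emeasure (density M f) A + d * emeasure (density M g) A)"
  proof (rule measure_of_eq)
    show "sets M \<subseteq> Pow (space M)"
      by (rule sets.space_closed)
    fix A assume "A \<in> sigma_sets (space M) (sets M)"
    then have [measurable]: "A \<in> sets M"
      by (simp add: sets.sigma_sets_eq)
    show "emeasure (density M (\<lambda>x. c * f x + d * g x)) A
        = c * emeasure (density M f) A + d * emeasure (density M g) A"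
      by (simp add: emeasure_density nn_integral_add nn_integral_cmult distrib_right mult.assoc)
  qed
  finally show ?thesis ..
qed

lemma uniform_measure_lborel_Icc:
  fixes a b :: real
  assumes "a < b"
  shows "uniform_measure lborel {a..b} = density lborel (\<lambda>x. ennreal (indicator {a..b} x / (b - a)))"
proof -
  have "1 / ennreal (b - a) = ennreal (1 / (b - a))"
    using divide_ennreal[of 1 "b - a"] assms by simp
  then have "indicator {a..b} x / ennreal (b - a) = ennreal (indicator {a..b} x / (b - a))" for x
    by (simp split: split_indicator)
  then show ?thesis
    using assms by (simp add: uniform_measure_def)
qed

definition pmix_density :: "real \<Rightarrow> real" where
  "pmix_density x = 3/2 * indicator {0..1/2} x + indicator {3/4..1} x"

lemma pmix_density_measurable [measurable]: "pmix_density \<in> borel_measurable borel"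
  unfolding pmix_density_def by measurable

lemma pmix_density_nonneg: "0 \<le> pmix_density x"
  by (simp add: pmix_density_def)

lemma Pmix_eq_density: "Pmix = density lborel (\<lambda>x. ennreal (pmix_density x))"
proof -
  define f1 :: "real \<Rightarrow> ennreal" where "f1 = (\<lambda>x. ennreal (indicator {0..1/2} x / (1/2)))"
  define f2 :: "real \<Rightarrow> ennreal" where "f2 = (\<lambda>x. ennreal (indicator {3/4..1} x / (1/4)))"
  have [measurable]: "f1 \<in> borel_measurable borel" "f2 \<in> borel_measurable borel"
    unfolding f1_def f2_def by simp_all
  have "Pmix = measure_of (space lborel) (sets lborel)
      (\<lambda>A. ennreal (3/4) * emeasure (density lborel f1) A
          + ennreal (1/4) * emeasure (density lborel f2) A)"
    unfolding Pmix_def P1_def P2_def f1_def f2_def by (simp add: uniform_measure_lborel_Icc)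
  also have "\<dots> = density lborel (\<lambda>x. ennreal (3/4) * f1 x + ennreal (1/4) * f2 x)"
    by (rule density_mixture) simp_all
  also have "\<dots> = density lborel (\<lambda>x. ennreal (pmix_density x))"
    by (simp add: f1_def f2_def pmix_density_def ennreal_mult'[symmetric] ennreal_plus[symmetric]
        del: ennreal_plus split: split_indicator)
  finally show ?thesis .
qed

lemma Min_sq_dist_nearest:
  fixes x a :: real
  assumes "finite A" "a \<in> A" "\<And>b. b \<in> A \<Longrightarrow> \<bar>x - a\<bar> \<le> \<bar>x - b\<bar>"
  shows "Min ((\<lambda>b. (x - b)\<^sup>2) ` A) = (x - a)\<^sup>2"
  using assms by (intro Min_eqI) (auto simp: abs_le_square_iff)

lemma Min_sq_dist_sorted3:
  fixes x a1 a2 a3 :: real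
  assumes "a1 \<le> a2" "a2 \<le> a3"
  shows "Min ((\<lambda>a. (x - a)\<^sup>2) ` {a1, a2, a3}) =
    (if x \<le> (a1 + a2) / 2 then (x - a1)\<^sup>2
     else if x \<le> (a2 + a3) / 2 then (x - a2)\<^sup>2
     else (x - a3)\<^sup>2)"
proof -
  have nearest: "Min ((\<lambda>a. (x - a)\<^sup>2) ` {a1, a2, a3}) = (x - a)\<^sup>2"
    if "a \<in> {a1, a2, a3}" "\<And>b. b \<in> {a1, a2, a3} \<Longrightarrow> \<bar>x - a\<bar> \<le> \<bar>x - b\<bar>" for a
    using that by (intro Min_sq_dist_nearest) auto
  consider "x \<le> (a1 + a2) / 2" | "(a1 + a2) / 2 < x" "x \<le> (a2 + a3) / 2" | "(a2 + a3) / 2 < x"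
    by linarith
  then show ?thesis
  proof cases
    case 1
    then show ?thesis using assms by (subst nearest[of a1]) (auto simp: abs_if)
  next
    case 2
    then show ?thesis using assms by (subst nearest[of a2]) (auto simp: abs_if)
  next
    case 3
    then show ?thesis using assms by (subst nearest[of a3]) (auto simp: abs_if)
  qed
qed

definition sq_dist_integral :: "real \<Rightarrow> real \<Rightarrow> real \<Rightarrow> real" where
  "sq_dist_integral u v a = ((v - a) ^ 3 - (u - a) ^ 3) / 3"

lemma has_integral_sq_dist:
  assumes "u \<le> v" and g: "\<And>x. u < x \<Longrightarrow> x < v \<Longrightarrow> g x = (x - a)\<^sup>2"
  shows "(g has_integral sq_dist_integral u v a) {u..v}"
proof -
  have "((\<lambda>x. (x - a)\<^sup>2) has_integral (v - a) ^ 3 / 3 - (u - a) ^ 3 / 3) {u..v}"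
  proof (rule fundamental_theorem_of_calculus[OF \<open>u \<le> v\<close>])
    fix x :: real
    show "((\<lambda>x. (x - a) ^ 3 / 3) has_vector_derivative (x - a)\<^sup>2) (at x within {u..v})"
      unfolding has_real_derivative_iff_has_vector_derivative[symmetric]
      by (auto intro!: derivative_eq_intros simp: power2_eq_square)
  qed
  then have "((\<lambda>x. (x - a)\<^sup>2) has_integral sq_dist_integral u v a) {u..v}"
    by (simp add: sq_dist_integral_def diff_divide_distrib)
  then show ?thesis
    by (rule has_integral_spike_finite[of "{u, v}", rotated 2]) (auto simp: g)
qed

lemma sq_dist_integral_eq: "sq_dist_integral u v a = (v - u) ^ 3 / 12 + (v - u) * (a - (u + v) / 2)\<^sup>2"
  unfolding sq_dist_integral_def by (simp add: power3_eq_cube power2_eq_square field_simps)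

lemma sq_dist_integral_ge: "u \<le> v \<Longrightarrow> (v - u) ^ 3 / 12 \<le> sq_dist_integral u v a"
  unfolding sq_dist_integral_eq by simp

lemma sq_dist_integral_nonneg: "u \<le> v \<Longrightarrow> 0 \<le> sq_dist_integral u v a"
  unfolding sq_dist_integral_eq by (intro add_nonneg_nonneg) simp_all

lemma sq_dist_integral_same [simp]: "sq_dist_integral u u a = 0"
  by (simp add: sq_dist_integral_def)

definition voronoi3_cost :: "real \<Rightarrow> real \<Rightarrow> real \<Rightarrow> real \<Rightarrow> real \<Rightarrow> real" where
  "voronoi3_cost lo hi a1 a2 a3 =
    (let c1 = clamp lo hi ((a1 + a2) / 2); c2 = clamp lo hi ((a2 + a3) / 2)
     in sq_dist_integral lo c1 a1 + sq_dist_integral c1 c2 a2 + sq_dist_integral c2 hi a3)"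

lemma has_integral_Min_sq_dist_sorted3:
  assumes sorted: "a1 \<le> a2" "a2 \<le> a3" and "lo \<le> hi"
  shows "((\<lambda>x. Min ((\<lambda>a. (x - a)\<^sup>2) ` {a1, a2, a3})) has_integral voronoi3_cost lo hi a1 a2 a3)
           {lo..hi}" (is "(?g has_integral _) _")
proof -
  define c1 where "c1 = clamp lo hi ((a1 + a2) / 2)"
  define c2 where "c2 = clamp lo hi ((a2 + a3) / 2)"
  note clamp = clamp_real[OF \<open>lo \<le> hi\<close>]
  have "c1 \<le> c2"
    unfolding c1_def c2_def using sorted \<open>lo \<le> hi\<close> by (intro clamp_real_mono) auto
  then have cuts: "lo \<le> c1" "c1 \<le> c2" "c2 \<le> hi"
    using \<open>lo \<le> hi\<close> by (simp_all add: c1_def c2_def clamp)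
  note nearest = Min_sq_dist_sorted3[OF sorted]
  have cell1: "(?g has_integral sq_dist_integral lo c1 a1) {lo..c1}"
    by (rule has_integral_sq_dist[OF cuts(1)], subst nearest)
      (auto simp: c1_def clamp less_max_iff_disj)
  have cell2: "(?g has_integral sq_dist_integral c1 c2 a2) {c1..c2}"
    by (rule has_integral_sq_dist[OF cuts(2)], subst nearest)
      (auto simp: c1_def c2_def clamp less_max_iff_disj min_less_iff_disj)
  have cell3: "(?g has_integral sq_dist_integral c2 hi a3) {c2..hi}"
    by (rule has_integral_sq_dist[OF cuts(3)], subst nearest)
      (use sorted in \<open>auto simp: c2_def clamp min_less_iff_disj\<close>)
  show ?thesis
    unfolding voronoi3_cost_def Let_def c1_def[symmetric] c2_def[symmetric]
    using has_integral_combine[OF _ _ has_integral_combine[OF _ _ cell1 cell2] cell3] cuts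
    by simp
qed

lemma distortion_Pmix_sorted3:
  assumes sorted: "a1 \<le> a2" "a2 \<le> a3"
  shows "distortion Pmix {a1, a2, a3}
       = ennreal (3/2 * voronoi3_cost 0 (1/2) a1 a2 a3 + voronoi3_cost (3/4) 1 a1 a2 a3)"
proof -
  define g where "g x = Min ((\<lambda>a. (x - a)\<^sup>2) ` {a1, a2, a3})" for x
  have g_nonneg: "0 \<le> g x" for x
    by (simp add: g_def)
  have [measurable]: "g \<in> borel_measurable borel"
    unfolding g_def[abs_def] by simp
  have on_interval: "((\<lambda>x. if x \<in> {lo..hi} then g x else 0) has_integral voronoi3_cost lo hi a1 a2 a3) UNIV"
    if "lo \<le> hi" for lo hi
    unfolding has_integral_restrict_UNIV g_def[abs_def]
    using sorted that by (rule has_integral_Min_sq_dist_sorted3)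
  have "((\<lambda>x. 3/2 * (if x \<in> {0..1/2} then g x else 0) + (if x \<in> {3/4..1} then g x else 0))
          has_integral 3/2 * voronoi3_cost 0 (1/2) a1 a2 a3 + voronoi3_cost (3/4) 1 a1 a2 a3) UNIV"
    by (intro has_integral_add has_integral_mult_right on_interval) simp_all
  moreover have "3/2 * (if x \<in> {0..1/2} then g x else 0) + (if x \<in> {3/4..1} then g x else 0)
      = pmix_density x * g x" for x
    by (simp add: pmix_density_def algebra_simps)
  ultimately have weighted: "((\<lambda>x. pmix_density x * g x)
          has_integral 3/2 * voronoi3_cost 0 (1/2) a1 a2 a3 + voronoi3_cost (3/4) 1 a1 a2 a3) UNIV"
    by simp
  have "(\<integral>\<^sup>+ x. ennreal (pmix_density x * g x) \<partial>lborel)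
      = ennreal (3/2 * voronoi3_cost 0 (1/2) a1 a2 a3 + voronoi3_cost (3/4) 1 a1 a2 a3)"
    using nn_integral_has_integral_lebesgue[OF _ weighted] pmix_density_nonneg g_nonneg by simp
  moreover have "distortion Pmix {a1, a2, a3} = (\<integral>\<^sup>+ x. ennreal (pmix_density x * g x) \<partial>lborel)"
    unfolding distortion_def Pmix_eq_density g_def[symmetric]
    by (subst nn_integral_density) (simp_all add: pmix_density_nonneg g_nonneg ennreal_mult)
  ultimately show ?thesis
    by simp
qed

lemma weighted_sq_sum_ge:
  fixes A B D X Y :: real
  assumes "0 \<le> A" "0 \<le> B" "0 \<le> D" "D \<le> X - Y"
  shows "A * B * D\<^sup>2 \<le> (A + B) * (A * X\<^sup>2 + B * Y\<^sup>2)"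
proof -
  have "A * B * D\<^sup>2 \<le> A * B * (X - Y)\<^sup>2"
    using assms by (intro mult_left_mono power_mono) auto
  also have "\<dots> \<le> A * B * (X - Y)\<^sup>2 + (A * X + B * Y)\<^sup>2"
    by simp
  also have "\<dots> = (A + B) * (A * X\<^sup>2 + B * Y\<^sup>2)"
    by (simp add: power2_eq_square algebra_simps)
  finally show ?thesis .
qed

lemma sum_cubes_ge:
  fixes p q :: real
  assumes "0 \<le> p" "0 \<le> q"
  shows "(p + q) ^ 3 / 4 \<le> p ^ 3 + q ^ 3"
proof -
  have "0 \<le> 3 * (p + q) * (p - q)\<^sup>2"
    using assms by simp
  also have "\<dots> = 4 * (p ^ 3 + q ^ 3) - (p + q) ^ 3"
    by (simp add: power3_eq_cube power2_eq_square algebra_simps)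
  finally show ?thesis
    by simp
qed

lemma Pmix_gap_cell_to_end_cost_ge:
  assumes "0 \<le> l" "l \<le> 1/2"
  shows "l ^ 3 / 8 + 1/768 + 3 * l / 128
           \<le> 3/2 * sq_dist_integral (1/2 - l) (1/2) a + sq_dist_integral (3/4) 1 a"
proof -
  define K where "K = 3 * l / 2 * (a - (1/2 - l/2))\<^sup>2 + 1/4 * (a - 7/8)\<^sup>2"
  have cost: "3/2 * sq_dist_integral (1/2 - l) (1/2) a + sq_dist_integral (3/4) 1 a
      = l ^ 3 / 8 + 1/768 + K"
    unfolding sq_dist_integral_eq K_def by (simp add: power3_eq_cube power2_eq_square field_simps)
  \<comment> \<open>the two pieces have masses 3l/2 and 1/4 and centroids at least 3/8 apart\<close>
  have "3 * l / 2 * (1/4) * (3/8)\<^sup>2 \<le> (3 * l / 2 + 1/4) * K"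
    unfolding K_def by (rule weighted_sq_sum_ge) (use assms in auto)
  moreover have "(3 * l / 2 + 1/4) * (3 * l / 128) \<le> 3 * l / 2 * (1/4) * (3/8)\<^sup>2"
  proof -
    have "0 \<le> l * (3/64 - 9 * l / 256)"
      using assms by (intro mult_nonneg_nonneg) auto
    then show ?thesis
      by (simp add: power2_eq_square algebra_simps)
  qed
  ultimately have "(3 * l / 2 + 1/4) * (3 * l / 128) \<le> (3 * l / 2 + 1/4) * K"
    by linarith
  then have "3 * l / 128 \<le> K"
    by (rule mult_left_le_imp_le) (use assms in linarith)
  then show ?thesis
    unfolding cost by linarith
qed

text \<open>
  The deficit \<open>3/16 (s - 1/4)\<^sup>2\<close> is paid for by the cell [0, 1/2 - s] to the left of the
  gap cell: \<open>3/2 (x\<^sup>3 + s\<^sup>3)/12 = 1/256 + 3/16 (s - 1/4)\<^sup>2\<close> for x = 1/2 - s.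
\<close>

lemma Pmix_gap_cell_moment_ge:
  fixes s t a :: real
  assumes "0 \<le> s" "0 \<le> t" "t \<le> 1/4"
  shows "t / 64 - 3/16 * (s - 1/4)\<^sup>2 \<le> 3 * s / 2 * (a - (1/2 - s/2))\<^sup>2 + t * (a - (3/4 + t/2))\<^sup>2"
    (is "_ \<le> ?K")
proof -
  have K_nonneg: "0 \<le> ?K"
    using assms by simp
  consider "t = 0" | "0 < t" "2 * t \<le> 9 * s" | "9 * s < 2 * t"
    using assms by linarith
  then show ?thesis
  proof cases
    case 1
    then show ?thesis
      using K_nonneg zero_le_power2[of "s - 1/4"] by linarith
  next
    case 2
    \<comment> \<open>the two pieces have masses 3s/2 and t and centroids at least 1/4 apart\<close>
    have "3 * s / 2 * t * (1/4)\<^sup>2 \<le> (3 * s / 2 + t) * ?K"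
      by (rule weighted_sq_sum_ge) (use assms in auto)
    moreover have "(3 * s / 2 + t) * (t / 64) \<le> 3 * s / 2 * t * (1/4)\<^sup>2"
    proof -
      have "0 \<le> t * (9 * s / 2 - t)"
        using 2 by (intro mult_nonneg_nonneg) auto
      then show ?thesis
        by (simp add: power2_eq_square algebra_simps)
    qed
    ultimately have "(3 * s / 2 + t) * (t / 64) \<le> (3 * s / 2 + t) * ?K"
      by linarith
    then have "t / 64 \<le> ?K"
      by (rule mult_left_le_imp_le) (use assms 2 in linarith)
    then show ?thesis
      using zero_le_power2[of "s - 1/4"] by linarith
  next
    case 3
    then have "7/36 \<le> 1/4 - s"
      using assms by linarith
    then have "(7/36)\<^sup>2 \<le> (1/4 - s)\<^sup>2"
      by (rule power_mono) simp
    then have "49/1296 \<le> (s - 1/4)\<^sup>2"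
      by (simp add: power2_commute power_divide)
    then show ?thesis
      using assms K_nonneg by linarith
  qed
qed

lemma Pmix_gap_cell_cost_ge:
  assumes "0 \<le> s" "0 \<le> t" "t \<le> 1/4"
  shows "s ^ 3 / 8 + t ^ 3 / 12 + t / 64 - 3/16 * (s - 1/4)\<^sup>2
           \<le> 3/2 * sq_dist_integral (1/2 - s) (1/2) a + sq_dist_integral (3/4) (3/4 + t) a"
proof -
  have "3/2 * sq_dist_integral (1/2 - s) (1/2) a + sq_dist_integral (3/4) (3/4 + t) a
      = s ^ 3 / 8 + t ^ 3 / 12 + (3 * s / 2 * (a - (1/2 - s/2))\<^sup>2 + t * (a - (3/4 + t/2))\<^sup>2)"
    unfolding sq_dist_integral_eq by (simp add: power3_eq_cube power2_eq_square field_simps)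
  then show ?thesis
    using Pmix_gap_cell_moment_ge[OF assms, of a] by linarith
qed

lemma Pmix_cost_ge_gap_in_third_cell:
  assumes "0 \<le> x" "x \<le> y" "y \<le> 1/2"
  shows "1/192 \<le> 3/2 * (sq_dist_integral 0 x a1 + sq_dist_integral x y a2 + sq_dist_integral y (1/2) a3)
                   + sq_dist_integral (3/4) 1 a3"
proof -
  have "y ^ 3 / 4 \<le> x ^ 3 + (y - x) ^ 3"
    using sum_cubes_ge[of x "y - x"] assms by simp
  then have left: "y ^ 3 / 32 \<le> 3/2 * sq_dist_integral 0 x a1 + 3/2 * sq_dist_integral x y a2"
    using sq_dist_integral_ge[of 0 x a1] sq_dist_integral_ge[of x y a2] assms by simp
  have gap: "(1/2 - y) ^ 3 / 8 + 1/768 + 3 * (1/2 - y) / 128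
      \<le> 3/2 * sq_dist_integral y (1/2) a3 + sq_dist_integral (3/4) 1 a3"
    using Pmix_gap_cell_to_end_cost_ge[of "1/2 - y" a3] assms by simp
  have "0 \<le> (y - 1/2)\<^sup>2 * (y + 1)"
    using assms by simp
  also have "\<dots> = y ^ 3 - 3 * y / 4 + 1/4"
    by (simp add: power2_eq_square power3_eq_cube algebra_simps)
  finally have "0 \<le> y ^ 3 - 3 * y / 4 + 1/4" .
  moreover have "0 \<le> (1/2 - y) ^ 3"
    using assms by simp
  ultimately show ?thesis
    unfolding distrib_left using left gap by argo
qed

lemma Pmix_cost_ge_gap_in_second_cell:
  assumes "0 \<le> x" "x \<le> 1/2" "3/4 \<le> z" "z \<le> 1"
  shows "1/192 \<le> 3/2 * (sq_dist_integral 0 x a1 + sq_dist_integral x (1/2) a2)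
                   + (sq_dist_integral (3/4) z a2 + sq_dist_integral z 1 a3)"
proof -
  have gap: "(1/2 - x) ^ 3 / 8 + (z - 3/4) ^ 3 / 12 + (z - 3/4) / 64 - 3/16 * ((1/2 - x) - 1/4)\<^sup>2
      \<le> 3/2 * sq_dist_integral x (1/2) a2 + sq_dist_integral (3/4) z a2"
    using Pmix_gap_cell_cost_ge[of "1/2 - x" "z - 3/4" a2] assms by simp
  have "x ^ 3 + (1/2 - x) ^ 3 = 1/32 + 3/2 * ((1/2 - x) - 1/4)\<^sup>2"
    by (simp add: power2_eq_square power3_eq_cube algebra_simps)
  moreover have "(z - 3/4) ^ 3 + (1 - z) ^ 3 = 1/64 - 3 * (z - 3/4) / 16 + 3 * (z - 3/4)\<^sup>2 / 4"
    by (simp add: power2_eq_square power3_eq_cube field_simps)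
  moreover have "x ^ 3 / 12 \<le> sq_dist_integral 0 x a1" "(1 - z) ^ 3 / 12 \<le> sq_dist_integral z 1 a3"
    using sq_dist_integral_ge[of 0 x a1] sq_dist_integral_ge[of z 1 a3] assms by simp_all
  ultimately show ?thesis
    unfolding distrib_left using gap zero_le_power2[of "z - 3/4"] by argo
qed

lemma Pmix_voronoi3_cost_ge:
  assumes sorted: "a1 \<le> a2" "a2 \<le> a3"
  shows "1/192 \<le> 3/2 * voronoi3_cost 0 (1/2) a1 a2 a3 + voronoi3_cost (3/4) 1 a1 a2 a3"
proof -
  define m1 where "m1 = (a1 + a2) / 2"
  define m2 where "m2 = (a2 + a3) / 2"
  define x where "x = clamp 0 (1/2) m1"
  define y where "y = clamp 0 (1/2) m2"
  define w where "w = clamp (3/4) 1 m1"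
  define z where "z = clamp (3/4) 1 m2"
  have "m1 \<le> m2"
    using sorted by (simp add: m1_def m2_def)
  then have cuts: "0 \<le> x" "x \<le> y" "y \<le> 1/2" "3/4 \<le> w" "w \<le> z" "z \<le> 1"
    by (simp_all add: x_def y_def w_def z_def clamp_real_mono) (simp_all add: clamp_real)
  have cost: "3/2 * voronoi3_cost 0 (1/2) a1 a2 a3 + voronoi3_cost (3/4) 1 a1 a2 a3
      = 3/2 * (sq_dist_integral 0 x a1 + sq_dist_integral x y a2 + sq_dist_integral y (1/2) a3)
        + (sq_dist_integral (3/4) w a1 + sq_dist_integral w z a2 + sq_dist_integral z 1 a3)"
    by (simp add: voronoi3_cost_def Let_def m1_def m2_def x_def y_def w_def z_def)
  have nonneg: "0 \<le> sq_dist_integral x y a2" "0 \<le> sq_dist_integral y (1/2) a3"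
    "0 \<le> sq_dist_integral (3/4) w a1" "0 \<le> sq_dist_integral w z a2" "0 \<le> sq_dist_integral z 1 a3"
    using cuts by (simp_all add: sq_dist_integral_nonneg)
  consider "1/2 \<le> m1" | "m1 < 1/2" "m2 \<le> 3/4" | "m1 < 1/2" "3/4 < m2"
    by linarith
  then show ?thesis
  proof cases
    case 1
    then have "x = 1/2"
      by (simp add: x_def clamp_real)
    have "1/96 \<le> sq_dist_integral 0 x a1"
      unfolding \<open>x = 1/2\<close> using sq_dist_integral_ge[of 0 "1/2" a1] by (simp add: power3_eq_cube)
    then show ?thesis
      unfolding cost distrib_left using nonneg by linarith
  next
    case 2
    then have w: "w = 3/4" and z: "z = 3/4"
      by (simp_all add: w_def z_def clamp_real)
    show ?thesis
      unfolding cost w z using Pmix_cost_ge_gap_in_third_cell[OF cuts(1-3)] by simp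
  next
    case 3
    then have w: "w = 3/4" and y: "y = 1/2"
      by (simp_all add: w_def y_def clamp_real)
    have "x \<le> 1/2" "3/4 \<le> z"
      using cuts w by linarith+
    then show ?thesis
      unfolding cost w y using Pmix_cost_ge_gap_in_second_cell[OF cuts(1) _ _ cuts(6)] by simp
  qed
qed

lemma finite_card_le_3_sorted:
  fixes A :: "real set"
  assumes "finite A" "A \<noteq> {}" "card A \<le> 3"
  obtains a1 a2 a3 where "a1 \<le> a2" "a2 \<le> a3" "A = {a1, a2, a3}"
proof -
  define xs where "xs = sorted_list_of_set A"
  have xs: "set xs = A" "sorted xs" "xs \<noteq> []" "length xs \<le> 3"
    using assms by (auto simp: xs_def)
  then consider a where "xs = [a]" | a b where "xs = [a, b]" | a b c where "xs = [a, b, c]"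
    by (auto simp: numeral_3_eq_3 le_Suc_eq length_Suc_conv)
  then show ?thesis
  proof cases
    case (1 a)
    then show ?thesis
      using that[of a a a] xs by simp
  next
    case (2 a b)
    then show ?thesis
      using that[of a b b] xs by simp
  next
    case (3 a b c)
    then show ?thesis
      using that[of a b c] xs by simp
  qed
qed

lemma optimal_n_means_if_minimal:
  assumes "finite \<alpha>" "\<alpha> \<noteq> {}" "card \<alpha> \<le> n"
    and minimal: "\<And>\<beta>. finite \<beta> \<Longrightarrow> \<beta> \<noteq> {} \<Longrightarrow> card \<beta> \<le> n \<Longrightarrow> distortion P \<alpha> \<le> distortion P \<beta>"
  shows "optimal_n_means P n \<alpha> \<and> quant_error P n = distortion P \<alpha>"
proof -
  have "quant_error P n = distortion P \<alpha>"
    unfolding quant_error_def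
  proof (rule antisym)
    show "(INF \<beta> \<in> {\<beta>. finite \<beta> \<and> \<beta> \<noteq> {} \<and> card \<beta> \<le> n}. distortion P \<beta>) \<le> distortion P \<alpha>"
      using assms(1-3) by (intro INF_lower) simp
    show "distortion P \<alpha> \<le> (INF \<beta> \<in> {\<beta>. finite \<beta> \<and> \<beta> \<noteq> {} \<and> card \<beta> \<le> n}. distortion P \<beta>)"
      using minimal by (intro INF_greatest) simp
  qed
  then show ?thesis
    using assms(1-3) by (simp add: optimal_n_means_def)
qed

theorem lemma3p4:
  shows "optimal_n_means Pmix 3 {1/8, 3/8, 7/8} \<and> quant_error Pmix 3 = ennreal (1/192)"
proof -
  have optimum: "distortion Pmix {1/8, 3/8, 7/8} = ennreal (1/192)"
    by (simp add: distortion_Pmix_sorted3 voronoi3_cost_def sq_dist_integral_def clamp_real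
        power3_eq_cube)
  have "distortion Pmix {1/8, 3/8, 7/8} \<le> distortion Pmix \<beta>"
    if admissible: "finite \<beta>" "\<beta> \<noteq> {}" "card \<beta> \<le> 3" for \<beta>
  proof -
    obtain a1 a2 a3 where sorted: "a1 \<le> a2" "a2 \<le> a3" and \<beta>: "\<beta> = {a1, a2, a3}"
      using finite_card_le_3_sorted[OF admissible] .
    show ?thesis
      unfolding optimum \<beta> distortion_Pmix_sorted3[OF sorted]
      by (rule ennreal_leI) (rule Pmix_voronoi3_cost_ge[OF sorted])
  qed
  then show ?thesis
    using optimal_n_means_if_minimal[of "{1/8, 3/8, 7/8}" 3 Pmix] optimum by simp
qed

end
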